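(* Let $\Gamma_2$ be a finite alphabet and $n\in\mathbb N$. There is a pushdown automaton with $3n+2$ states and stack alphabet consisting of two symbols, in whose runs the stack height never exceeds $n$, whose language is exactly $(\Gamma_2)^{2^n}$ (the set of words over $\Gamma_2$ of length $2^n$).
   Context: A pushdown automaton has transitions labelled by a letter or $\epsilon$ and a stack operation (push a symbol, pop a symbol, or no operation); it accepts a word if there is a run from the initial state with empty stack reading the word and ending in a final state with empty stack. *)

theory Defs
  imports Main
begin

datatype 'g stack_op = Push 'g | Pop 'g | Nop

datatype ('a, 'q, 'g) pda = PDA
  (states: "'q set")
  (sigma: "'a set")
  (gamma: "'g set")
  (trans: "('q \<times> 'a option \<times> 'g stack_op \<times> 'q) set")
  (init: 'q)
  (final: "'q set")

definition wf_pda :: "('a, 'q, 'g) pda \<Rightarrow> bool" where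
  "wf_pda P \<longleftrightarrow> finite (states P) \<and> finite (sigma P) \<and> finite (gamma P)
     \<and> init P \<in> states P \<and> final P \<subseteq> states P
     \<and> (\<forall>(p, a, op, q) \<in> trans P. p \<in> states P \<and> q \<in> states P
          \<and> set_option a \<subseteq> sigma P \<and> set_stack_op op \<subseteq> gamma P)"

fun apply_op :: "'g stack_op \<Rightarrow> 'g list \<Rightarrow> 'g list option" where
  "apply_op (Push g) s = Some (g # s)"
| "apply_op (Pop g) [] = None"
| "apply_op (Pop g) (h # s) = (if h = g then Some s else None)"
| "apply_op Nop s = Some s"

inductive reach :: "('a, 'q, 'g) pda \<Rightarrow> 'q \<times> 'g list \<Rightarrow> 'a list \<Rightarrow> 'q \<times> 'g list \<Rightarrow> bool"
  for P where
  refl: "reach P c [] c"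
| step: "reach P c w (p, s) \<Longrightarrow> (p, a, f, q) \<in> trans P \<Longrightarrow> apply_op f s = Some s'
         \<Longrightarrow> reach P c (w @ (case a of None \<Rightarrow> [] | Some x \<Rightarrow> [x])) (q, s')"

definition pda_lang :: "('a, 'q, 'g) pda \<Rightarrow> 'a list set" where
  "pda_lang P = {w. \<exists>q \<in> final P. reach P (init P, []) w (q, [])}"

definition stack_bounded :: "('a, 'q, 'g) pda \<Rightarrow> nat \<Rightarrow> bool" where
  "stack_bounded P n \<longleftrightarrow> (\<forall>w q s. reach P (init P, []) w (q, s) \<longrightarrow> length s \<le> n)"

end

theory Submission
  imports Defs
begin

(* Levels k = 0, ..., n: from state k the automaton reads a block of 2^k letters and arrives
   in state n + 1 + k with the same stack; at level 0 a block is a single letter.  A block at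
   level k + 1 is read as two blocks at level k: the first is entered after pushing 0, the
   second, via the intermediate state 2 n + 2 + k, after pushing 1, and at the end of a block
   at level k the popped symbol decides whether the second half follows or the larger block
   is complete.  Hence the stack holds the binary digits of the number of letters read so
   far, its height is n minus the current level, and from state n the final state 2 n + 1 is
   reached with empty stack exactly after 2^n letters. *)

lemma reach_append:
  assumes "reach P c u c'" and "reach P c' v c''"
  shows "reach P c (u @ v) c''"
  using assms(2,1)
proof (induction rule: reach.induct)
  case refl
  then show ?case by simp
next
  case (step w p s a f q s')
  from reach.step[OF step.IH[OF step.prems] step.hyps(2,3)] show ?case by simp
qed

lemma reach_single:
  assumes "(p, a, f, q) \<in> trans P" and "apply_op f s = Some s'"
  shows "reach P (p, s) (case a of None \<Rightarrow> [] | Some x \<Rightarrow> [x]) (q, s')"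
  using reach.step[OF reach.refl assms] by simp

lemma reach_letters_in_sigma:
  assumes "\<forall>(p, a, f, q) \<in> trans P. set_option a \<subseteq> sigma P" and "reach P c w c'"
  shows "set w \<subseteq> sigma P"
  using assms(2) by induction (use assms(1) in \<open>auto split: option.splits\<close>)

lemma apply_op_Pop_eq_Some [simp]: "apply_op (Pop g) s = Some s' \<longleftrightarrow> s = g # s'"
  by (cases s) auto

definition pow2_trans :: "'a set \<Rightarrow> nat \<Rightarrow> (nat \<times> 'a option \<times> nat stack_op \<times> nat) set" where
  "pow2_trans G n =
      {(0, Some a, Nop, n + 1) | a. a \<in> G}
    \<union> {(Suc k, None, Push 0, k) | k. k < n}
    \<union> {(n + 1 + k, None, Pop 0, 2 * n + 2 + k) | k. k < n}
    \<union> {(2 * n + 2 + k, None, Push 1, k) | k. k < n}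
    \<union> {(n + 1 + k, None, Pop 1, n + 2 + k) | k. k < n}"

definition pow2_pda :: "'a set \<Rightarrow> nat \<Rightarrow> ('a, nat, nat) pda" where
  "pow2_pda G n = PDA {0..3 * n + 1} G {0, 1} (pow2_trans G n) n {2 * n + 1}"

fun bits_value :: "nat \<Rightarrow> nat list \<Rightarrow> nat" where
  "bits_value k [] = 0"
| "bits_value k (b # s) = b * 2 ^ k + bits_value (Suc k) s"

definition counter_config :: "nat \<Rightarrow> nat \<Rightarrow> nat list \<Rightarrow> nat \<Rightarrow> bool" where
  "counter_config n q s m \<longleftrightarrow>
      (\<exists>k\<le>n. q = k \<and> length s = n - k \<and> m = bits_value k s)
    \<or> (\<exists>k\<le>n. q = n + 1 + k \<and> length s = n - k \<and> m = bits_value k s + 2 ^ k)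
    \<or> (\<exists>k<n. q = 2 * n + 2 + k \<and> length s = n - Suc k \<and> m = bits_value (Suc k) s + 2 ^ k)"

lemma counter_config_step:
  assumes "counter_config n p s m" and "(p, a, f, q) \<in> pow2_trans G n"
    and "apply_op f s = Some s'"
  shows "counter_config n q s' (m + length (case a of None \<Rightarrow> [] | Some x \<Rightarrow> [x]))"
  using assms unfolding pow2_trans_def counter_config_def by auto

lemma pow2_pda_counter_config:
  assumes "reach (pow2_pda G n) (n, []) w c"
  shows "counter_config n (fst c) (snd c) (length w)"
  using assms
proof (induction "(n, []::nat list)" w c rule: reach.induct)
  case refl
  then show ?case by (simp add: counter_config_def)
next
  case (step w p s a f q s')
  then show ?case
    using counter_config_step[of n p s "length w" a f q G s'] by (simp add: pow2_pda_def)
qed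

lemma pow2_pda_reads_block:
  assumes "set w \<subseteq> G" and "length w = 2 ^ k" and "k \<le> n"
  shows "reach (pow2_pda G n) (k, s) w (n + 1 + k, s)"
  using assms
proof (induction k arbitrary: w s)
  case 0
  then obtain a where "w = [a]" "a \<in> G"
    by (cases w) auto
  moreover have "(0, Some a, Nop, n + 1) \<in> trans (pow2_pda G n)"
    using \<open>a \<in> G\<close> by (auto simp: pow2_pda_def pow2_trans_def)
  ultimately show ?case
    using reach_single by fastforce
next
  case (Suc k)
  let ?P = "pow2_pda G n"
  obtain u v where w: "w = u @ v" and u: "length u = 2 ^ k" and v: "length v = 2 ^ k"
    using Suc.prems(2) by (intro that[of "take (2 ^ k) w" "drop (2 ^ k) w"]) auto
  have letters: "set u \<subseteq> G" "set v \<subseteq> G"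
    using Suc.prems(1) w by auto
  have trans_Suc: "(Suc k, None, Push 0, k) \<in> trans ?P"
      "(n + 1 + k, None, Pop 0, 2 * n + 2 + k) \<in> trans ?P"
      "(2 * n + 2 + k, None, Push 1, k) \<in> trans ?P"
      "(n + 1 + k, None, Pop 1, n + 2 + k) \<in> trans ?P"
    using Suc.prems(3) by (auto simp: pow2_pda_def pow2_trans_def)
  note reach_append[trans]
  have "reach ?P (Suc k, s) [] (k, 0 # s)"
    using reach_single[OF trans_Suc(1)] by simp
  also have "reach ?P (k, 0 # s) u (n + 1 + k, 0 # s)"
    using Suc.IH[OF letters(1) u] Suc.prems(3) by simp
  also have "reach ?P (n + 1 + k, 0 # s) [] (2 * n + 2 + k, s)"
    using reach_single[OF trans_Suc(2)] by simp
  also have "reach ?P (2 * n + 2 + k, s) [] (k, 1 # s)"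
    using reach_single[OF trans_Suc(3)] by simp
  also have "reach ?P (k, 1 # s) v (n + 1 + k, 1 # s)"
    using Suc.IH[OF letters(2) v] Suc.prems(3) by simp
  also have "reach ?P (n + 1 + k, 1 # s) [] (n + 1 + Suc k, s)"
    using reach_single[OF trans_Suc(4)] by simp
  finally show ?case
    using w by simp
qed

lemma wf_pow2_pda: "finite G \<Longrightarrow> wf_pda (pow2_pda G n)"
  unfolding wf_pda_def pow2_pda_def pow2_trans_def by auto

lemma pow2_pda_stack_bounded: "stack_bounded (pow2_pda G n) n"
  unfolding stack_bounded_def
  using pow2_pda_counter_config by (fastforce simp: pow2_pda_def counter_config_def)

lemma pow2_pda_lang: "pda_lang (pow2_pda G n) = {w. set w \<subseteq> G \<and> length w = 2 ^ n}"
proof (intro set_eqI iffI)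
  fix w
  assume "w \<in> pda_lang (pow2_pda G n)"
  then have run: "reach (pow2_pda G n) (n, []) w (2 * n + 1, [])"
    by (simp add: pda_lang_def pow2_pda_def)
  have "set w \<subseteq> G"
    using reach_letters_in_sigma[OF _ run] by (auto simp: pow2_pda_def pow2_trans_def)
  moreover have "length w = 2 ^ n"
    using pow2_pda_counter_config[OF run] by (auto simp: counter_config_def)
  ultimately show "w \<in> {w. set w \<subseteq> G \<and> length w = 2 ^ n}"
    by simp
next
  fix w
  assume "w \<in> {w. set w \<subseteq> G \<and> length w = 2 ^ n}"
  then have "reach (pow2_pda G n) (n, []) w (2 * n + 1, [])"
    using pow2_pda_reads_block[of w G n n] by (simp add: mult_2)
  then show "w \<in> pda_lang (pow2_pda G n)"
    by (simp add: pda_lang_def pow2_pda_def)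
qed

theorem claim4p5:
  fixes \<Gamma> :: "'a set" and n :: nat
  assumes "finite \<Gamma>"
  shows "\<exists>P :: ('a, nat, nat) pda. wf_pda P \<and> sigma P = \<Gamma>
           \<and> card (states P) = 3 * n + 2 \<and> card (gamma P) = 2
           \<and> stack_bounded P n
           \<and> pda_lang P = {w. set w \<subseteq> \<Gamma> \<and> length w = 2 ^ n}"
proof (intro exI conjI)
  show "wf_pda (pow2_pda \<Gamma> n)"
    using assms by (rule wf_pow2_pda)
  show "sigma (pow2_pda \<Gamma> n) = \<Gamma>" "card (states (pow2_pda \<Gamma> n)) = 3 * n + 2"
    "card (gamma (pow2_pda \<Gamma> n)) = 2"
    by (simp_all add: pow2_pda_def)
  show "stack_bounded (pow2_pda \<Gamma> n) n"
    by (rule pow2_pda_stack_bounded)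
  show "pda_lang (pow2_pda \<Gamma> n) = {w. set w \<subseteq> \<Gamma> \<and> length w = 2 ^ n}"
    by (rule pow2_pda_lang)
qed

end
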